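(* For all integers $k\ge 2$, $s\in\mathbb{N}$ and every $\delta>0$, there exist $\gamma=\gamma(k,s,\delta)>0$ and $n_0$ such that the following holds for all $n\ge n_0$. Let $G$ be a $k$-uniform hypergraph on $n$ vertices with $\min\{e(G),\binom{n}{k}-e(G)\}\ge\delta n^k$, and let $W\subseteq\binom{V(G)}{k}$ satisfy $|W|\le\gamma n^k$. Then $G$ contains, as an induced subhypergraph, a non-homogeneous $(k,k,s)$-pattern $F$ that avoids $W$, i.e. $\binom{V(F)}{k}\cap W=\emptyset$.
   Context: For $k,t,s\in\mathbb{N}$ with $k,t\ge 2$, a $(k,t,s)$-pattern is a $k$-uniform hypergraph $F$ admitting a partition $V(F)=V_1\cup\cdots\cup V_t$ into parts of size $s$ each, such that for every $S\in\binom{V(F)}{k}$, whether $S\in E(F)$ depends only on $(|S\cap V_1|,\ldots,|S\cap V_t|)$. $F$ is homogeneous if it is empty (no edges) or complete (all $k$-subsets are edges). *)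

theory Defs
  imports Complex_Main
begin

definition ksets :: "'a set \<Rightarrow> nat \<Rightarrow> 'a set set" where
  "ksets X k = {S. S \<subseteq> X \<and> card S = k}"

definition is_pattern :: "nat \<Rightarrow> nat \<Rightarrow> nat \<Rightarrow> 'a set \<Rightarrow> 'a set set \<Rightarrow> bool" where
  "is_pattern k t s VF EF \<longleftrightarrow> finite VF \<and> EF \<subseteq> ksets VF k \<and>
     (\<exists>P :: nat \<Rightarrow> 'a set.
        (\<forall>i<t. P i \<subseteq> VF \<and> card (P i) = s) \<and>
        (\<forall>i<t. \<forall>j<t. i \<noteq> j \<longrightarrow> P i \<inter> P j = {}) \<and>
        (\<Union>i<t. P i) = VF \<and>
        (\<forall>S\<in>ksets VF k. \<forall>S'\<in>ksets VF k.
            (\<forall>i<t. card (S \<inter> P i) = card (S' \<inter> P i)) \<longrightarrow> (S \<in> EF \<longleftrightarrow> S' \<in> EF)))"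

definition homogeneous :: "nat \<Rightarrow> 'a set \<Rightarrow> 'a set set \<Rightarrow> bool" where
  "homogeneous k VF EF \<longleftrightarrow> EF = {} \<or> EF = ksets VF k"

definition induced_edges :: "nat \<Rightarrow> 'a set set \<Rightarrow> 'a set \<Rightarrow> 'a set set" where
  "induced_edges k E U = E \<inter> ksets U k"

end

theory Submission
  imports Defs "HOL-Library.Ramsey" "HOL-Library.FuncSet" "HOL-Analysis.Convex"
begin

lemma convex_on_power_nonneg: "convex_on {0::real..} (\<lambda>x. x ^ m)"
  by (cases "even m") (auto intro: convex_on_subset[OF convex_power_even] convex_power_odd)

lemma card_mult_power_le_sum_power:
  fixes g :: "'a \<Rightarrow> real"
  assumes A: "finite A" and g: "\<And>a. a \<in> A \<Longrightarrow> 0 \<le> g a"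
    and x: "0 \<le> x" "real (card A) * x \<le> (\<Sum>a\<in>A. g a)"
  shows "real (card A) * x ^ m \<le> (\<Sum>a\<in>A. g a ^ m)"
proof (cases "A = {}")
  case False
  define c where "c = real (card A)"
  have c: "c > 0" using A False unfolding c_def by (simp add: card_gt_0_iff)
  have "x ^ m \<le> ((\<Sum>a\<in>A. g a) / c) ^ m"
    using x c unfolding c_def by (intro power_mono) (simp_all add: field_simps)
  also have "\<dots> = (\<Sum>a\<in>A. (1 / c) *\<^sub>R g a) ^ m"
    by (simp add: sum_divide_distrib)
  also have "\<dots> \<le> (\<Sum>a\<in>A. 1 / c * g a ^ m)"
    using c g False by (intro convex_on_sum[OF A _ convex_on_power_nonneg]) (auto simp: c_def)
  also have "\<dots> = (\<Sum>a\<in>A. g a ^ m) / c"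
    by (simp add: sum_divide_distrib)
  finally show ?thesis
    using c unfolding c_def[symmetric] by (simp add: field_simps)
qed simp

lemma sum_card_filter_swap:
  assumes "finite A" "finite B"
  shows "(\<Sum>a\<in>A. card {b \<in> B. P a b}) = (\<Sum>b\<in>B. card {a \<in> A. P a b})"
proof -
  have "(\<Sum>a\<in>A. card {b \<in> B. P a b}) = (\<Sum>a\<in>A. \<Sum>b\<in>B. if P a b then 1 else 0)"
    using assms by (simp add: sum.If_cases Int_def conj_commute)
  also have "\<dots> = (\<Sum>b\<in>B. \<Sum>a\<in>A. if P a b then 1 else 0)"
    by (rule sum.swap)
  also have "\<dots> = (\<Sum>b\<in>B. card {a \<in> A. P a b})"
    using assms by (simp add: sum.If_cases Int_def conj_commute)
  finally show ?thesis .
qed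

lemma card_PiE_insert_filter:
  assumes "x \<notin> S" and "finite (T x)" and "finite (Pi\<^sub>E S T)"
  shows "card {g \<in> Pi\<^sub>E (insert x S) T. P g} = (\<Sum>y\<in>T x. card {g \<in> Pi\<^sub>E S T. P (g(x := y))})"
proof -
  let ?upd = "\<lambda>(y, g). g(x := y)"
  let ?Z = "Sigma (T x) (\<lambda>y. {g \<in> Pi\<^sub>E S T. P (g(x := y))})"
  have "{g \<in> Pi\<^sub>E (insert x S) T. P g} = ?upd ` ?Z"
    by (auto simp: PiE_insert_eq)
  moreover have "inj_on ?upd ?Z"
    by (rule inj_on_subset[OF inj_combinator[OF assms(1)]]) auto
  ultimately show ?thesis
    using assms(2,3) by (simp add: card_image)
qed

lemma card_tuples_Suc:
  "card {x \<in> {..<Suc r} \<rightarrow>\<^sub>E {..<n::nat}. f x} = (\<Sum>y<n. card {x \<in> {..<r} \<rightarrow>\<^sub>E {..<n}. f (x(r := y))})"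
  using card_PiE_insert_filter[of r "{..<r}" "\<lambda>_. {..<n}" f] by (simp add: lessThan_Suc finite_PiE)

definition blowup_hom :: "nat \<Rightarrow> nat \<Rightarrow> ((nat \<Rightarrow> nat) \<Rightarrow> bool) \<Rightarrow> (nat \<Rightarrow> nat \<Rightarrow> nat) \<Rightarrow> bool" where
  "blowup_hom r t f \<rho> \<longleftrightarrow> (\<forall>i \<in> {..<r} \<rightarrow>\<^sub>E {..<t}. f (\<lambda>j\<in>{..<r}. \<rho> j (i j)))"

lemma blowup_hom_upd_iff:
  "blowup_hom (Suc r) t f (\<rho>(r := c)) \<longleftrightarrow> (\<forall>l<t. blowup_hom r t (\<lambda>x. f (x(r := c l))) \<rho>)"
proof -
  have split: "(\<forall>i \<in> {..<Suc r} \<rightarrow>\<^sub>E {..<t}. P i) \<longleftrightarrow> (\<forall>l<t. \<forall>i \<in> {..<r} \<rightarrow>\<^sub>E {..<t}. P (i(r := l)))"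
    for P :: "(nat \<Rightarrow> nat) \<Rightarrow> bool"
    unfolding lessThan_Suc PiE_insert_eq by auto
  have transversal: "(\<lambda>j\<in>{..<Suc r}. (\<rho>(r := c)) j ((i(r := l)) j)) = (\<lambda>j\<in>{..<r}. \<rho> j (i j))(r := c l)"
    for i l by (rule ext) auto
  show ?thesis
    unfolding blowup_hom_def split transversal by blast
qed

lemma card_blowup_hom_Suc:
  fixes n t :: nat
  defines "R \<equiv> {..<t} \<rightarrow>\<^sub>E {..<n}"
  shows "card {\<rho> \<in> {..<Suc r} \<rightarrow>\<^sub>E R. blowup_hom (Suc r) t f \<rho>}
    = (\<Sum>\<rho> \<in> {..<r} \<rightarrow>\<^sub>E R. card {y \<in> {..<n}. blowup_hom r t (\<lambda>x. f (x(r := y))) \<rho>} ^ t)"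
proof -
  let ?Y = "\<lambda>\<rho>. {y \<in> {..<n}. blowup_hom r t (\<lambda>x. f (x(r := y))) \<rho>}"
  have fin: "finite R" "finite ({..<r} \<rightarrow>\<^sub>E R)"
    unfolding R_def by (auto intro!: finite_PiE)
  have "card {\<rho> \<in> {..<Suc r} \<rightarrow>\<^sub>E R. blowup_hom (Suc r) t f \<rho>}
      = (\<Sum>c\<in>R. card {\<rho> \<in> {..<r} \<rightarrow>\<^sub>E R. blowup_hom (Suc r) t f (\<rho>(r := c))})"
    unfolding lessThan_Suc using fin by (intro card_PiE_insert_filter) auto
  also have "\<dots> = (\<Sum>c\<in>R. card {\<rho> \<in> {..<r} \<rightarrow>\<^sub>E R. c \<in> {..<t} \<rightarrow>\<^sub>E ?Y \<rho>})"
  proof (intro sum.cong refl arg_cong[where f = card] Collect_cong conj_cong)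
    fix c \<rho> assume "c \<in> R"
    then show "blowup_hom (Suc r) t f (\<rho>(r := c)) \<longleftrightarrow> c \<in> {..<t} \<rightarrow>\<^sub>E ?Y \<rho>"
      unfolding blowup_hom_upd_iff R_def PiE_iff by blast
  qed
  also have "\<dots> = (\<Sum>\<rho> \<in> {..<r} \<rightarrow>\<^sub>E R. card {c \<in> R. c \<in> {..<t} \<rightarrow>\<^sub>E ?Y \<rho>})"
    using fin by (rule sum_card_filter_swap)
  also have "\<dots> = (\<Sum>\<rho> \<in> {..<r} \<rightarrow>\<^sub>E R. card (?Y \<rho>) ^ t)"
  proof (intro sum.cong refl)
    fix \<rho>
    have "?Y \<rho> \<subseteq> {..<n}" by blast
    then have "{c \<in> R. c \<in> {..<t} \<rightarrow>\<^sub>E ?Y \<rho>} = {..<t} \<rightarrow>\<^sub>E ?Y \<rho>"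
      unfolding R_def using PiE_mono[of "{..<t}" "\<lambda>_. ?Y \<rho>" "\<lambda>_. {..<n}"] by blast
    then show "card {c \<in> R. c \<in> {..<t} \<rightarrow>\<^sub>E ?Y \<rho>} = card (?Y \<rho>) ^ t"
      by (simp add: card_funcsetE)
  qed
  finally show ?thesis .
qed

theorem blowup_hom_supersaturation:
  fixes n :: nat
  assumes "n \<ge> 1"
  shows "real n ^ (r * t) * (real (card {x \<in> {..<r} \<rightarrow>\<^sub>E {..<n}. f x}) / real n ^ r) ^ (t ^ r)
    \<le> real (card {\<rho> \<in> {..<r} \<rightarrow>\<^sub>E ({..<t} \<rightarrow>\<^sub>E {..<n}). blowup_hom r t f \<rho>})"
proof (induction r arbitrary: f)
  case 0
  show ?case by (simp add: blowup_hom_def Collect_conv_if)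
next
  case (Suc r)
  let ?Rows = "{..<r} \<rightarrow>\<^sub>E ({..<t} \<rightarrow>\<^sub>E {..<n})"
  let ?f = "\<lambda>y x. f (x(r := y))"
  let ?Y = "\<lambda>\<rho>. real (card {y \<in> {..<n}. blowup_hom r t (?f y) \<rho>})"
  define d where "d y = real (card {x \<in> {..<r} \<rightarrow>\<^sub>E {..<n}. ?f y x}) / real n ^ r" for y
  define d' where "d' = real (card {x \<in> {..<Suc r} \<rightarrow>\<^sub>E {..<n}. f x}) / real n ^ Suc r"
  have n: "real n > 0" using assms by simp
  have card_Rows: "real (card ?Rows) = real n ^ (r * t)"
    by (simp add: card_funcsetE mult.commute flip: power_mult)
  have "real n * d' = (\<Sum>y<n. real (card {x \<in> {..<r} \<rightarrow>\<^sub>E {..<n}. ?f y x})) / real n ^ r"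
    using n unfolding d'_def card_tuples_Suc by simp
  also have "\<dots> = (\<Sum>y<n. d y)"
    unfolding d_def by (simp add: sum_divide_distrib)
  finally have "real n * d' ^ (t ^ r) \<le> (\<Sum>y<n. d y ^ (t ^ r))"
    using card_mult_power_le_sum_power[of "{..<n}" d d'] unfolding d_def d'_def by simp
  then have "real (card ?Rows) * (real n * d' ^ (t ^ r)) \<le> real n ^ (r * t) * (\<Sum>y<n. d y ^ (t ^ r))"
    unfolding card_Rows by (rule mult_left_mono) simp
  also have "\<dots> \<le> (\<Sum>y<n. real (card {\<rho> \<in> ?Rows. blowup_hom r t (?f y) \<rho>}))"
    unfolding d_def sum_distrib_left by (intro sum_mono Suc.IH)
  also have "\<dots> = (\<Sum>\<rho>\<in>?Rows. ?Y \<rho>)"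
    using sum_card_filter_swap[of "{..<n}" ?Rows "\<lambda>y \<rho>. blowup_hom r t (?f y) \<rho>"]
    by (simp add: finite_PiE flip: of_nat_sum)
  finally have "real (card ?Rows) * (real n * d' ^ (t ^ r)) ^ t \<le> (\<Sum>\<rho>\<in>?Rows. ?Y \<rho> ^ t)"
    using card_mult_power_le_sum_power[of ?Rows ?Y] unfolding d'_def by (simp add: finite_PiE)
  also have "\<dots> = real (card {\<rho> \<in> {..<Suc r} \<rightarrow>\<^sub>E ({..<t} \<rightarrow>\<^sub>E {..<n}). blowup_hom (Suc r) t f \<rho>})"
    unfolding card_blowup_hom_Suc by simp
  finally have step: "real (card ?Rows) * (real n * d' ^ (t ^ r)) ^ t
      \<le> real (card {\<rho> \<in> {..<Suc r} \<rightarrow>\<^sub>E ({..<t} \<rightarrow>\<^sub>E {..<n}). blowup_hom (Suc r) t f \<rho>})" .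
  have "real n ^ (Suc r * t) * d' ^ (t ^ Suc r) = real (card ?Rows) * (real n * d' ^ (t ^ r)) ^ t"
    unfolding card_Rows by (simp add: power_add power_mult_distrib power_mult[symmetric] mult.commute)
  with step show ?case
    unfolding d'_def by simp
qed

lemma inj_on_split_pullback:
  assumes "h ` A \<subseteq> D"
  shows "inj_on (\<lambda>w. (\<lambda>a\<in>A. w (h a), restrict w (D - h ` A))) (D \<rightarrow>\<^sub>E C)"
proof (rule inj_onI)
  fix w w' assume w: "w \<in> D \<rightarrow>\<^sub>E C" "w' \<in> D \<rightarrow>\<^sub>E C"
    and eq: "(\<lambda>a\<in>A. w (h a), restrict w (D - h ` A)) = (\<lambda>a\<in>A. w' (h a), restrict w' (D - h ` A))"
  show "w = w'"
  proof (rule PiE_ext[OF w])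
    fix d assume "d \<in> D"
    show "w d = w' d"
    proof (cases "d \<in> h ` A")
      case True
      then obtain a where "a \<in> A" "d = h a" by blast
      then show ?thesis using fun_cong[OF arg_cong[OF eq, of fst], of a] by simp
    next
      case False
      then show ?thesis using \<open>d \<in> D\<close> fun_cong[OF arg_cong[OF eq, of snd], of d] by simp
    qed
  qed
qed

lemma card_PiE_pullback_le:
  fixes n :: nat
  assumes D: "finite D" and A: "finite A" and h: "inj_on h A" "h ` A \<subseteq> D"
  shows "card {w \<in> D \<rightarrow>\<^sub>E {..<n}. P (\<lambda>a\<in>A. w (h a))}
    \<le> card {x \<in> A \<rightarrow>\<^sub>E {..<n}. P x} * n ^ (card D - card A)"
proof -
  let ?R = "D - h ` A"
  let ?split = "\<lambda>w. (\<lambda>a\<in>A. w (h a), restrict w ?R)"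
  have "?split ` {w \<in> D \<rightarrow>\<^sub>E {..<n}. P (\<lambda>a\<in>A. w (h a))}
      \<subseteq> {x \<in> A \<rightarrow>\<^sub>E {..<n}. P x} \<times> (?R \<rightarrow>\<^sub>E {..<n})"
  proof (intro image_subsetI)
    fix w assume w: "w \<in> {w \<in> D \<rightarrow>\<^sub>E {..<n}. P (\<lambda>a\<in>A. w (h a))}"
    have "(\<lambda>a\<in>A. w (h a)) \<in> A \<rightarrow>\<^sub>E {..<n}" "restrict w ?R \<in> ?R \<rightarrow>\<^sub>E {..<n}"
      unfolding restrict_PiE_iff using w h(2) by (auto simp: PiE_iff)
    then show "?split w \<in> {x \<in> A \<rightarrow>\<^sub>E {..<n}. P x} \<times> (?R \<rightarrow>\<^sub>E {..<n})"
      using w by simp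
  qed
  moreover have "finite ({x \<in> A \<rightarrow>\<^sub>E {..<n}. P x} \<times> (?R \<rightarrow>\<^sub>E {..<n}))"
    using A D by (simp add: finite_PiE)
  ultimately have "card {w \<in> D \<rightarrow>\<^sub>E {..<n}. P (\<lambda>a\<in>A. w (h a))}
      \<le> card ({x \<in> A \<rightarrow>\<^sub>E {..<n}. P x} \<times> (?R \<rightarrow>\<^sub>E {..<n}))"
    using inj_on_split_pullback[OF h(2), of "{..<n}"] by (intro card_inj_on_le) (auto intro: inj_on_subset)
  also have "card ?R = card D - card A"
    using h D by (simp add: card_Diff_subset card_image finite_subset)
  then have "card ({x \<in> A \<rightarrow>\<^sub>E {..<n}. P x} \<times> (?R \<rightarrow>\<^sub>E {..<n}))
      = card {x \<in> A \<rightarrow>\<^sub>E {..<n}. P x} * n ^ (card D - card A)"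
    using D by (simp add: card_cartesian_product card_funcsetE)
  finally show ?thesis .
qed

definition edge_switch :: "nat set set \<Rightarrow> nat \<Rightarrow> (nat \<Rightarrow> nat) \<Rightarrow> bool" where
  "edge_switch E k a \<longleftrightarrow> a ` {..<k} \<in> E \<and> (\<lambda>j. a (Suc j)) ` {..<k} \<notin> E"

lemma image_nth_sorted_list_of_set:
  "finite S \<Longrightarrow> (\<lambda>j. sorted_list_of_set S ! j) ` {..<card S} = S"
  using nth_image[of "card S" "sorted_list_of_set S"] by (simp add: atLeast0LessThan)

lemma card_edges_times_nonedges_le:
  fixes n k :: nat
  assumes E: "E \<subseteq> ksets {..<n} k"
  shows "card E * card (ksets {..<n} k - E)
    \<le> card {w \<in> {..<2*k} \<rightarrow>\<^sub>E {..<n}. w ` {..<k} \<in> E \<and> (\<lambda>j. w (k + j)) ` {..<k} \<notin> E}"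
proof -
  let ?K = "ksets {..<n} k"
  let ?Cross = "{w \<in> {..<2*k} \<rightarrow>\<^sub>E {..<n}. w ` {..<k} \<in> E \<and> (\<lambda>j. w (k + j)) ` {..<k} \<notin> E}"
  define enum where "enum S j = sorted_list_of_set S ! j" for S :: "nat set" and j
  define concat where "concat S T = (\<lambda>j\<in>{..<2*k}. if j < k then enum S j else enum T (j - k))" for S T
  have enum: "enum S ` {..<k} = S" if "S \<in> ?K" for S
    using that image_nth_sorted_list_of_set[of S] finite_subset[of S "{..<n}"]
    unfolding ksets_def enum_def by auto
  have first: "concat S T ` {..<k} = S" if "S \<in> ?K" for S T
    using enum[OF that] unfolding concat_def by (auto intro: image_cong)
  have second: "(\<lambda>j. concat S T (k + j)) ` {..<k} = T" if "T \<in> ?K" for S T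
    using enum[OF that] unfolding concat_def by (auto intro: image_cong)
  have "inj_on (case_prod concat) (E \<times> (?K - E))"
  proof (rule inj_on_inverseI)
    fix p assume "p \<in> E \<times> (?K - E)"
    then obtain S T where "p = (S, T)" "S \<in> ?K" "T \<in> ?K" using E by blast
    then show "(\<lambda>w. (w ` {..<k}, (\<lambda>j. w (k + j)) ` {..<k})) (case_prod concat p) = p"
      using first second by simp
  qed
  moreover have "case_prod concat ` (E \<times> (?K - E)) \<subseteq> ?Cross"
  proof (intro image_subsetI)
    fix p assume "p \<in> E \<times> (?K - E)"
    then obtain S T where ST: "p = (S, T)" "S \<in> E" "T \<in> ?K" "T \<notin> E" by blast
    then have "S \<in> ?K" using E by blast
    then have "enum S ` {..<k} \<subseteq> {..<n}" "enum T ` {..<k} \<subseteq> {..<n}"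
      using \<open>T \<in> ?K\<close> by (simp_all add: enum) (auto simp: ksets_def)
    then have "concat S T \<in> {..<2*k} \<rightarrow>\<^sub>E {..<n}"
      unfolding concat_def restrict_PiE_iff by force
    then show "case_prod concat p \<in> ?Cross"
      using ST \<open>S \<in> ?K\<close> first second by auto
  qed
  moreover have "finite ?Cross"
    by (simp add: finite_PiE)
  ultimately have "card (E \<times> (?K - E)) \<le> card ?Cross"
    by (rule card_inj_on_le)
  then show ?thesis
    by (simp add: card_cartesian_product)
qed

lemma card_edges_times_nonedges_le_switches:
  fixes n k :: nat
  assumes E: "E \<subseteq> ksets {..<n} k"
  shows "card E * card (ksets {..<n} k - E)
    \<le> k * card {a \<in> {..<Suc k} \<rightarrow>\<^sub>E {..<n}. edge_switch E k a} * n ^ (k - 1)"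
proof -
  let ?Cross = "{w \<in> {..<2*k} \<rightarrow>\<^sub>E {..<n}. w ` {..<k} \<in> E \<and> (\<lambda>j. w (k + j)) ` {..<k} \<notin> E}"
  let ?Win = "\<lambda>i. {w \<in> {..<2*k} \<rightarrow>\<^sub>E {..<n}. edge_switch E k (\<lambda>j\<in>{..<Suc k}. w (i + j))}"
  let ?Sw = "{a \<in> {..<Suc k} \<rightarrow>\<^sub>E {..<n}. edge_switch E k a}"
  have "?Cross \<subseteq> (\<Union>i<k. ?Win i)"
  proof
    fix w assume w: "w \<in> ?Cross"
    let ?P = "\<lambda>i. (\<lambda>j. w (i + j)) ` {..<k} \<notin> E"
    obtain i where i: "i < k" "\<not> ?P i" "?P (Suc i)"
      using ex_least_nat_less[of ?P k] w by auto
    have "(\<lambda>j\<in>{..<Suc k}. w (i + j)) ` {..<k} = (\<lambda>j. w (i + j)) ` {..<k}"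
      "(\<lambda>j. (\<lambda>j\<in>{..<Suc k}. w (i + j)) (Suc j)) ` {..<k} = (\<lambda>j. w (Suc i + j)) ` {..<k}"
      by (auto intro: image_cong)
    then have "edge_switch E k (\<lambda>j\<in>{..<Suc k}. w (i + j))"
      using i(2,3) unfolding edge_switch_def by simp
    then show "w \<in> (\<Union>i<k. ?Win i)"
      using i(1) w by blast
  qed
  then have "card ?Cross \<le> card (\<Union>i<k. ?Win i)"
    by (intro card_mono) (auto simp: finite_PiE)
  also have "\<dots> \<le> (\<Sum>i<k. card (?Win i))"
    by (rule card_UN_le) simp
  also have "\<dots> \<le> (\<Sum>i<k. card ?Sw * n ^ (k - 1))"
  proof (intro sum_mono)
    fix i assume "i \<in> {..<k}"
    then have "card (?Win i) \<le> card ?Sw * n ^ (card {..<2*k} - card {..<Suc k})"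
      by (intro card_PiE_pullback_le) auto
    then show "card (?Win i) \<le> card ?Sw * n ^ (k - 1)" by simp
  qed
  finally show ?thesis
    using card_edges_times_nonedges_le[OF E] by (simp add: mult.assoc)
qed

lemma ksets_eq_nsets: "finite X \<Longrightarrow> ksets X k = nsets X k"
  unfolding ksets_def nsets_def by (auto intro: finite_subset)

lemma switch_density_ge:
  fixes n k :: nat and \<delta> :: real
  assumes k: "k \<ge> 1" and n: "n \<ge> 1" and \<delta>: "\<delta> \<ge> 0"
    and E: "E \<subseteq> ksets {..<n} k"
    and dense: "min (real (card E)) (real (n choose k) - real (card E)) \<ge> \<delta> * real n ^ k"
  shows "\<delta>\<^sup>2 / real k \<le> real (card {a \<in> {..<Suc k} \<rightarrow>\<^sub>E {..<n}. edge_switch E k a}) / real n ^ Suc k"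
proof -
  let ?K = "ksets {..<n} k"
  let ?T = "real (card {a \<in> {..<Suc k} \<rightarrow>\<^sub>E {..<n}. edge_switch E k a})"
  have K: "finite ?K" "card ?K = n choose k"
    by (simp_all add: ksets_eq_nsets finite_imp_finite_nsets)
  have "card E \<le> card ?K"
    using K(1) E by (rule card_mono)
  then have nonedges: "real (card (?K - E)) = real (n choose k) - real (card E)"
    using K E by (simp add: card_Diff_subset finite_subset)
  have "k + k = Suc k + (k - 1)"
    using k by simp
  then have "real n ^ Suc k * real n ^ (k - 1) = real n ^ k * real n ^ k"
    by (metis power_add)
  then have "(\<delta>\<^sup>2 * real n ^ Suc k) * real n ^ (k - 1) = \<delta>\<^sup>2 * (real n ^ k * real n ^ k)"
    by (simp only: mult.assoc)
  also have "\<dots> = (\<delta> * real n ^ k) * (\<delta> * real n ^ k)"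
    by (simp add: power2_eq_square algebra_simps)
  also have "\<dots> \<le> real (card E) * real (card (?K - E))"
    using dense \<delta> unfolding nonedges by (intro mult_mono) auto
  also have "\<dots> \<le> (real k * ?T) * real n ^ (k - 1)"
    using card_edges_times_nonedges_le_switches[OF E] by (simp flip: of_nat_mult of_nat_power)
  finally have "(\<delta>\<^sup>2 * real n ^ Suc k) * real n ^ (k - 1) \<le> (real k * ?T) * real n ^ (k - 1)" .
  then have "\<delta>\<^sup>2 * real n ^ Suc k \<le> real k * ?T"
    using n by simp
  then show ?thesis
    using k n by (simp add: field_simps)
qed

lemma card_PiE_doubleton_eq_le:
  fixes n :: nat
  shows "card {x \<in> {p, q} \<rightarrow>\<^sub>E {..<n}. x p = x q} \<le> n"
proof -
  have "{x \<in> {p, q} \<rightarrow>\<^sub>E {..<n}. x p = x q} \<subseteq> (\<lambda>y. \<lambda>a\<in>{p, q}. y) ` {..<n}"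
    by (force simp: PiE_iff extensional_def)
  then have "card {x \<in> {p, q} \<rightarrow>\<^sub>E {..<n}. x p = x q} \<le> card ((\<lambda>y. \<lambda>a\<in>{p, q}. y) ` {..<n})"
    by (intro card_mono) simp_all
  also have "\<dots> \<le> n"
    using card_image_le[of "{..<n}"] by simp
  finally show ?thesis .
qed

lemma card_not_inj_on_le:
  fixes n :: nat
  assumes D: "finite D"
  shows "card {\<phi> \<in> D \<rightarrow>\<^sub>E {..<n}. \<not> inj_on \<phi> D} \<le> card D * card D * n ^ (card D - 1)"
proof -
  let ?B = "\<lambda>p q. {\<phi> \<in> D \<rightarrow>\<^sub>E {..<n}. (\<lambda>a\<in>{p, q}. \<phi> a) p = (\<lambda>a\<in>{p, q}. \<phi> a) q}"
  have fin: "finite (?B p q)" for p q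
    using D by (simp add: finite_PiE)
  have "{\<phi> \<in> D \<rightarrow>\<^sub>E {..<n}. \<not> inj_on \<phi> D} \<subseteq> (\<Union>p\<in>D. \<Union>q\<in>D - {p}. ?B p q)"
    unfolding inj_on_def by auto
  then have "card {\<phi> \<in> D \<rightarrow>\<^sub>E {..<n}. \<not> inj_on \<phi> D} \<le> card (\<Union>p\<in>D. \<Union>q\<in>D - {p}. ?B p q)"
    using D fin by (intro card_mono) auto
  also have "\<dots> \<le> (\<Sum>p\<in>D. \<Sum>q\<in>D - {p}. card (?B p q))"
    using D by (intro order_trans[OF card_UN_le] sum_mono card_UN_le) auto
  also have "\<dots> \<le> (\<Sum>p\<in>D. \<Sum>q\<in>D - {p}. n ^ (card D - 1))"
  proof (intro sum_mono)
    fix p q assume p: "p \<in> D" and q: "q \<in> D - {p}"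
    then have "{p, q} \<subseteq> D" and card_pq: "card {p, q} = 2" by auto
    then have "2 \<le> card D" using card_mono[OF D] by metis
    have "card (?B p q) \<le> card {x \<in> {p, q} \<rightarrow>\<^sub>E {..<n}. x p = x q} * n ^ (card D - card {p, q})"
      using p q D by (intro card_PiE_pullback_le[where h = "\<lambda>a. a"]) auto
    then have "card (?B p q) \<le> n * n ^ (card D - 2)"
      using card_PiE_doubleton_eq_le[of p q n] unfolding card_pq by (meson mult_le_mono1 order_trans)
    also have "\<dots> = n ^ Suc (card D - 2)"
      by simp
    also have "Suc (card D - 2) = card D - 1"
      using \<open>2 \<le> card D\<close> by simp
    finally show "card (?B p q) \<le> n ^ (card D - 1)" .
  qed
  also have "\<dots> \<le> card D * card D * n ^ (card D - 1)"
    using D by (simp add: sum_bounded_above)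
  finally show ?thesis .
qed

lemma card_PiE_image_eq_le:
  assumes "finite P" "finite w"
  shows "card {x \<in> P \<rightarrow>\<^sub>E C. x ` P = w} \<le> card w ^ card P"
proof -
  have "{x \<in> P \<rightarrow>\<^sub>E C. x ` P = w} \<subseteq> P \<rightarrow>\<^sub>E w"
  proof
    fix x assume "x \<in> {x \<in> P \<rightarrow>\<^sub>E C. x ` P = w}"
    then have "x \<in> extensional P" "x ` P = w" by (auto simp: PiE_iff)
    then show "x \<in> P \<rightarrow>\<^sub>E w" by (auto simp: PiE_iff)
  qed
  then have "card {x \<in> P \<rightarrow>\<^sub>E C. x ` P = w} \<le> card (P \<rightarrow>\<^sub>E w)"
    using assms by (intro card_mono finite_PiE) auto
  also have "\<dots> = card w ^ card P"
    using assms by (simp add: card_funcsetE)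
  finally show ?thesis .
qed

lemma card_hitting_le:
  fixes n :: nat
  assumes D: "finite D" and W: "W \<subseteq> ksets {..<n} k"
  shows "card {\<phi> \<in> D \<rightarrow>\<^sub>E {..<n}. \<exists>P\<in>ksets D k. \<phi> ` P \<in> W}
    \<le> (k * card D) ^ k * card W * n ^ (card D - k)"
proof -
  let ?B = "\<lambda>P w. {\<phi> \<in> D \<rightarrow>\<^sub>E {..<n}. (\<lambda>a\<in>P. \<phi> a) ` P = w}"
  have finK: "finite (ksets D k)" and finW: "finite W"
    using D W finite_subset[OF W] by (simp_all add: ksets_eq_nsets finite_imp_finite_nsets)
  have fin: "finite (?B P w)" for P w
    using D by (simp add: finite_PiE)
  have "{\<phi> \<in> D \<rightarrow>\<^sub>E {..<n}. \<exists>P\<in>ksets D k. \<phi> ` P \<in> W} \<subseteq> (\<Union>P\<in>ksets D k. \<Union>w\<in>W. ?B P w)"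
  proof
    fix \<phi> assume "\<phi> \<in> {\<phi> \<in> D \<rightarrow>\<^sub>E {..<n}. \<exists>P\<in>ksets D k. \<phi> ` P \<in> W}"
    then obtain P where "\<phi> \<in> D \<rightarrow>\<^sub>E {..<n}" "P \<in> ksets D k" "\<phi> ` P \<in> W" by blast
    moreover have "(\<lambda>a\<in>P. \<phi> a) ` P = \<phi> ` P" by (rule image_restrict_eq)
    ultimately show "\<phi> \<in> (\<Union>P\<in>ksets D k. \<Union>w\<in>W. ?B P w)" by blast
  qed
  then have "card {\<phi> \<in> D \<rightarrow>\<^sub>E {..<n}. \<exists>P\<in>ksets D k. \<phi> ` P \<in> W} \<le> card (\<Union>P\<in>ksets D k. \<Union>w\<in>W. ?B P w)"
    using finK finW fin by (intro card_mono) auto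
  also have "\<dots> \<le> (\<Sum>P\<in>ksets D k. card (\<Union>w\<in>W. ?B P w))"
    by (rule card_UN_le[OF finK])
  also have "\<dots> \<le> (\<Sum>P\<in>ksets D k. \<Sum>w\<in>W. card (?B P w))"
    by (intro sum_mono card_UN_le[OF finW])
  also have "\<dots> \<le> (\<Sum>P\<in>ksets D k. \<Sum>w\<in>W. k ^ k * n ^ (card D - k))"
  proof (intro sum_mono)
    fix P w assume P: "P \<in> ksets D k" and w: "w \<in> W"
    have PD: "P \<subseteq> D" "card P = k" "finite P"
      using P D finite_subset unfolding ksets_def by auto
    have "card w = k" "w \<subseteq> {..<n}"
      using w W unfolding ksets_def by auto
    then have "card {x \<in> P \<rightarrow>\<^sub>E {..<n}. x ` P = w} \<le> k ^ k"
      using PD card_PiE_image_eq_le[of P w "{..<n}"] finite_subset[OF \<open>w \<subseteq> {..<n}\<close>] by simp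
    moreover have "card (?B P w) \<le> card {x \<in> P \<rightarrow>\<^sub>E {..<n}. x ` P = w} * n ^ (card D - card P)"
      using PD D by (intro card_PiE_pullback_le[where h = "\<lambda>a. a"]) auto
    ultimately show "card (?B P w) \<le> k ^ k * n ^ (card D - k)"
      using PD(2) by (meson mult_le_mono1 order_trans)
  qed
  also have "\<dots> = card (ksets D k) * k ^ k * card W * n ^ (card D - k)"
    by simp
  also have "\<dots> \<le> (k * card D) ^ k * card W * n ^ (card D - k)"
  proof -
    have "card (ksets D k) \<le> card D ^ k"
      using D by (cases "k \<le> card D") (simp_all add: ksets_eq_nsets binomial_le_pow binomial_eq_0)
    then show ?thesis
      by (simp add: power_mult_distrib mult.commute)
  qed
  finally show ?thesis .
qed

lemma bij_betw_uncurry_PiE: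
  "bij_betw (\<lambda>\<rho>. \<lambda>p\<in>A \<times> B. \<rho> (fst p) (snd p)) (A \<rightarrow>\<^sub>E (B \<rightarrow>\<^sub>E C)) (A \<times> B \<rightarrow>\<^sub>E C)"
proof (rule bij_betw_imageI)
  show "inj_on (\<lambda>\<rho>. \<lambda>p\<in>A \<times> B. \<rho> (fst p) (snd p)) (A \<rightarrow>\<^sub>E (B \<rightarrow>\<^sub>E C))"
  proof (rule inj_onI)
    fix \<rho> \<rho>' assume \<rho>: "\<rho> \<in> A \<rightarrow>\<^sub>E (B \<rightarrow>\<^sub>E C)" "\<rho>' \<in> A \<rightarrow>\<^sub>E (B \<rightarrow>\<^sub>E C)"
      and eq: "(\<lambda>p\<in>A \<times> B. \<rho> (fst p) (snd p)) = (\<lambda>p\<in>A \<times> B. \<rho>' (fst p) (snd p))"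
    show "\<rho> = \<rho>'"
    proof (rule PiE_ext[OF \<rho>])
      fix j assume j: "j \<in> A"
      show "\<rho> j = \<rho>' j"
        using PiE_mem[OF \<rho>(1) j] PiE_mem[OF \<rho>(2) j]
      proof (rule PiE_ext)
        fix i assume "i \<in> B"
        then show "\<rho> j i = \<rho>' j i"
          using fun_cong[OF eq, of "(j, i)"] j by simp
      qed
    qed
  qed
  show "(\<lambda>\<rho>. \<lambda>p\<in>A \<times> B. \<rho> (fst p) (snd p)) ` (A \<rightarrow>\<^sub>E (B \<rightarrow>\<^sub>E C)) = A \<times> B \<rightarrow>\<^sub>E C"
  proof (intro equalityI subsetI)
    fix \<phi> assume \<phi>: "\<phi> \<in> A \<times> B \<rightarrow>\<^sub>E C"
    then have "\<phi> = (\<lambda>p\<in>A \<times> B. (\<lambda>j\<in>A. \<lambda>i\<in>B. \<phi> (j, i)) (fst p) (snd p))"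
      by (intro PiE_ext[OF \<phi>]) auto
    moreover have "(\<lambda>j\<in>A. \<lambda>i\<in>B. \<phi> (j, i)) \<in> A \<rightarrow>\<^sub>E (B \<rightarrow>\<^sub>E C)"
      using \<phi> by (auto simp: PiE_iff)
    ultimately show "\<phi> \<in> (\<lambda>\<rho>. \<lambda>p\<in>A \<times> B. \<rho> (fst p) (snd p)) ` (A \<rightarrow>\<^sub>E (B \<rightarrow>\<^sub>E C))"
      by (rule image_eqI)
  qed (auto simp: PiE_iff)
qed

lemma card_PiE_rows_filter:
  assumes "\<And>\<phi>. P (restrict \<phi> (A \<times> B)) \<longleftrightarrow> P \<phi>"
  shows "card {\<rho> \<in> A \<rightarrow>\<^sub>E (B \<rightarrow>\<^sub>E C). P (\<lambda>(j, i). \<rho> j i)} = card {\<phi> \<in> A \<times> B \<rightarrow>\<^sub>E C. P \<phi>}"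
proof -
  have flat: "P (\<lambda>p\<in>A \<times> B. \<rho> (fst p) (snd p)) \<longleftrightarrow> P (\<lambda>(j, i). \<rho> j i)" for \<rho>
    using assms[of "\<lambda>(j, i). \<rho> j i"] by (simp add: split_def)
  show ?thesis
    by (rule bij_betw_same_card, rule bij_betw_Collect[OF bij_betw_uncurry_PiE]) (simp add: flat)
qed

lemma card_rows_not_inj_le:
  fixes n :: nat
  assumes "finite A" "finite B"
  shows "card {\<rho> \<in> A \<rightarrow>\<^sub>E (B \<rightarrow>\<^sub>E {..<n}). \<not> inj_on (\<lambda>(j, i). \<rho> j i) (A \<times> B)}
    \<le> card (A \<times> B) * card (A \<times> B) * n ^ (card (A \<times> B) - 1)"
proof -
  have "card {\<rho> \<in> A \<rightarrow>\<^sub>E (B \<rightarrow>\<^sub>E {..<n}). \<not> inj_on (\<lambda>(j, i). \<rho> j i) (A \<times> B)}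
      = card {\<phi> \<in> A \<times> B \<rightarrow>\<^sub>E {..<n}. \<not> inj_on \<phi> (A \<times> B)}"
    by (rule card_PiE_rows_filter) simp
  then show ?thesis
    using card_not_inj_on_le[of "A \<times> B" n] assms by simp
qed

lemma card_rows_hitting_le:
  fixes n :: nat
  assumes "finite A" "finite B" and W: "W \<subseteq> ksets {..<n} k"
  shows "card {\<rho> \<in> A \<rightarrow>\<^sub>E (B \<rightarrow>\<^sub>E {..<n}). \<exists>P \<in> ksets (A \<times> B) k. (\<lambda>(j, i). \<rho> j i) ` P \<in> W}
    \<le> (k * card (A \<times> B)) ^ k * card W * n ^ (card (A \<times> B) - k)"
proof -
  have "restrict \<phi> (A \<times> B) ` P = \<phi> ` P" if "P \<in> ksets (A \<times> B) k" for \<phi> :: "'a \<times> 'b \<Rightarrow> nat" and P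
    using that unfolding ksets_def by (intro image_cong) auto
  then have "card {\<rho> \<in> A \<rightarrow>\<^sub>E (B \<rightarrow>\<^sub>E {..<n}). \<exists>P \<in> ksets (A \<times> B) k. (\<lambda>(j, i). \<rho> j i) ` P \<in> W}
      = card {\<phi> \<in> A \<times> B \<rightarrow>\<^sub>E {..<n}. \<exists>P \<in> ksets (A \<times> B) k. \<phi> ` P \<in> W}"
    by (intro card_PiE_rows_filter bex_cong refl) simp
  then show ?thesis
    using card_hitting_le[of "A \<times> B" W n k] assms by simp
qed

lemma card_switch_blowups_ge:
  fixes n k t :: nat and \<delta> :: real
  assumes k: "k \<ge> 1" and n: "n \<ge> 1" and \<delta>: "\<delta> \<ge> 0"
    and E: "E \<subseteq> ksets {..<n} k"
    and dense: "min (real (card E)) (real (n choose k) - real (card E)) \<ge> \<delta> * real n ^ k"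
  shows "(\<delta>\<^sup>2 / real k) ^ (t ^ Suc k) * real n ^ (Suc k * t)
    \<le> real (card {\<rho> \<in> {..<Suc k} \<rightarrow>\<^sub>E ({..<t} \<rightarrow>\<^sub>E {..<n}). blowup_hom (Suc k) t (edge_switch E k) \<rho>})"
proof -
  have "(\<delta>\<^sup>2 / real k) ^ (t ^ Suc k)
      \<le> (real (card {a \<in> {..<Suc k} \<rightarrow>\<^sub>E {..<n}. edge_switch E k a}) / real n ^ Suc k) ^ (t ^ Suc k)"
    using switch_density_ge[OF k n \<delta> E dense] \<delta> by (intro power_mono) auto
  then show ?thesis
    using blowup_hom_supersaturation[OF n, of "Suc k" t "edge_switch E k"] n
    by (simp add: mult.commute order_trans[OF mult_left_mono])
qed

lemma card_degenerate_rows_le: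
  fixes k t n :: nat and c :: real
  defines "D \<equiv> {..<Suc k} \<times> {..<t}" and "N \<equiv> Suc k * t"
  assumes k: "k \<ge> 1" and t: "t \<ge> 1" and c: "c > 0"
    and W: "W \<subseteq> ksets {..<n} k" and small: "real (card W) \<le> c / (4 * real (k * N) ^ k) * real n ^ k"
    and large: "4 * real N ^ 2 / c \<le> real n"
  shows "real (card {\<rho> \<in> {..<Suc k} \<rightarrow>\<^sub>E ({..<t} \<rightarrow>\<^sub>E {..<n}). \<not> inj_on (\<lambda>(j, i). \<rho> j i) D})
       + real (card {\<rho> \<in> {..<Suc k} \<rightarrow>\<^sub>E ({..<t} \<rightarrow>\<^sub>E {..<n}). \<exists>P \<in> ksets D k. (\<lambda>(j, i). \<rho> j i) ` P \<in> W})
    \<le> c / 2 * real n ^ N"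
proof -
  have D: "card D = N"
    unfolding D_def N_def by (simp add: card_cartesian_product)
  have "k \<le> N"
    unfolding N_def using mult_le_mono2[OF t, of "Suc k"] by simp
  then have N: "N > 0"
    using k by simp
  have "real (N * N * n ^ (N - 1)) = real N ^ 2 * real n ^ (N - 1)"
    by (simp add: power2_eq_square)
  also have "\<dots> \<le> (c / 4 * real n) * real n ^ (N - 1)"
    using large c by (intro mult_right_mono) (simp_all add: field_simps)
  also have "\<dots> = c / 4 * real n ^ N"
    using N by (simp add: power_eq_if)
  finally have clash: "real (N * N * n ^ (N - 1)) \<le> c / 4 * real n ^ N" .
  have "real ((k * N) ^ k * card W * n ^ (N - k)) = real (k * N) ^ k * real (card W) * real n ^ (N - k)"
    by (simp only: of_nat_mult of_nat_power)
  also have "\<dots> \<le> real (k * N) ^ k * (c / (4 * real (k * N) ^ k) * real n ^ k) * real n ^ (N - k)"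
    using small by (intro mult_right_mono mult_left_mono) simp_all
  also have "\<dots> = c / 4 * real n ^ N"
  proof -
    have "real n ^ k * real n ^ (N - k) = real n ^ N"
      using \<open>k \<le> N\<close> by (simp flip: power_add)
    then show ?thesis
      using k N by (simp add: field_simps)
  qed
  finally have hit: "real ((k * N) ^ k * card W * n ^ (N - k)) \<le> c / 4 * real n ^ N" .
  have "real (card {\<rho> \<in> {..<Suc k} \<rightarrow>\<^sub>E ({..<t} \<rightarrow>\<^sub>E {..<n}). \<not> inj_on (\<lambda>(j, i). \<rho> j i) D})
      \<le> real (N * N * n ^ (N - 1))"
    using card_rows_not_inj_le[of "{..<Suc k}" "{..<t}" n] unfolding D_def[symmetric] D of_nat_le_iff by simp
  moreover have "real (card {\<rho> \<in> {..<Suc k} \<rightarrow>\<^sub>E ({..<t} \<rightarrow>\<^sub>E {..<n}). \<exists>P \<in> ksets D k. (\<lambda>(j, i). \<rho> j i) ` P \<in> W})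
      \<le> real ((k * N) ^ k * card W * n ^ (N - k))"
    using card_rows_hitting_le[of "{..<Suc k}" "{..<t}" W n k] W unfolding D_def[symmetric] D of_nat_le_iff by simp
  ultimately show ?thesis
    using clash hit by linarith
qed

lemma exists_injective_avoiding_blowup:
  fixes k t n :: nat and \<delta> c :: real
  defines "D \<equiv> {..<Suc k} \<times> {..<t}" and "N \<equiv> Suc k * t"
  assumes k: "k \<ge> 1" and t: "t \<ge> 1" and \<delta>: "\<delta> > 0" and c: "c = (\<delta>\<^sup>2 / real k) ^ (t ^ Suc k)"
    and E: "E \<subseteq> ksets {..<n} k"
    and dense: "min (real (card E)) (real (n choose k) - real (card E)) \<ge> \<delta> * real n ^ k"
    and W: "W \<subseteq> ksets {..<n} k" and small: "real (card W) \<le> c / (4 * real (k * N) ^ k) * real n ^ k"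
    and large: "4 * real N ^ 2 / c \<le> real n"
  obtains \<rho> where "\<rho> \<in> {..<Suc k} \<rightarrow>\<^sub>E ({..<t} \<rightarrow>\<^sub>E {..<n})"
    and "blowup_hom (Suc k) t (edge_switch E k) \<rho>"
    and "inj_on (\<lambda>(j, i). \<rho> j i) D" and "\<forall>P \<in> ksets D k. (\<lambda>(j, i). \<rho> j i) ` P \<notin> W"
proof -
  let ?Rows = "{..<Suc k} \<rightarrow>\<^sub>E ({..<t} \<rightarrow>\<^sub>E {..<n})"
  let ?Good = "{\<rho> \<in> ?Rows. blowup_hom (Suc k) t (edge_switch E k) \<rho>}"
  let ?Clash = "{\<rho> \<in> ?Rows. \<not> inj_on (\<lambda>(j, i). \<rho> j i) D}"
  let ?Hit = "{\<rho> \<in> ?Rows. \<exists>P \<in> ksets D k. (\<lambda>(j, i). \<rho> j i) ` P \<in> W}"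
  have c_pos: "c > 0"
    using c \<delta> k by simp
  have "N > 0"
    unfolding N_def using t by simp
  then have "0 < 4 * real N ^ 2 / c"
    using c_pos by simp
  then have n: "n \<ge> 1"
    using large by simp
  have bad: "real (card ?Clash) + real (card ?Hit) \<le> c / 2 * real n ^ N"
    unfolding D_def N_def by (rule card_degenerate_rows_le[OF k t c_pos W small[unfolded N_def] large[unfolded N_def]])
  have good: "c * real n ^ N \<le> real (card ?Good)"
    unfolding c N_def using card_switch_blowups_ge[OF k n _ E dense] \<delta> by simp
  have "\<not> ?Good \<subseteq> ?Clash \<union> ?Hit"
  proof
    assume "?Good \<subseteq> ?Clash \<union> ?Hit"
    then have "card ?Good \<le> card (?Clash \<union> ?Hit)"
      by (intro card_mono) (simp_all add: finite_PiE)
    also have "\<dots> \<le> card ?Clash + card ?Hit"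
      by (rule card_Un_le)
    finally have "real (card ?Good) \<le> real (card ?Clash) + real (card ?Hit)"
      by (simp only: of_nat_add[symmetric] of_nat_le_iff)
    moreover have "0 < c * real n ^ N"
      using c_pos n by simp
    ultimately show False
      using good bad by linarith
  qed
  then obtain \<rho> where "\<rho> \<in> ?Good" "\<rho> \<notin> ?Clash" "\<rho> \<notin> ?Hit"
    by blast
  then show thesis
    using that by blast
qed

definition rank_in :: "nat set \<Rightarrow> nat \<Rightarrow> nat" where
  "rank_in A x = card {y \<in> A. y < x}"

lemma rank_in_mono: "finite A \<Longrightarrow> x \<le> y \<Longrightarrow> rank_in A x \<le> rank_in A y"
  unfolding rank_in_def by (rule card_mono) auto

lemma rank_in_strict_mono:
  assumes "finite A" "x \<in> A" "x < y"
  shows "rank_in A x < rank_in A y"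
  unfolding rank_in_def using assms by (intro psubset_card_mono) auto

lemma rank_in_less_card: "finite A \<Longrightarrow> x \<in> A \<Longrightarrow> rank_in A x < card A"
  unfolding rank_in_def by (rule psubset_card_mono) auto

lemma card_le_eq_Suc_rank_in: "finite A \<Longrightarrow> x \<in> A \<Longrightarrow> card {y \<in> A. y \<le> x} = Suc (rank_in A x)"
proof -
  assume "finite A" "x \<in> A"
  then have "{y \<in> A. y \<le> x} = insert x {y \<in> A. y < x}" by auto
  then show ?thesis unfolding rank_in_def using \<open>finite A\<close> by simp
qed

lemma bij_betw_rank_in: "finite A \<Longrightarrow> bij_betw (rank_in A) A {..<card A}"
proof -
  assume A: "finite A"
  have "inj_on (rank_in A) A"
    by (rule inj_onI) (metis A linorder_neqE_nat rank_in_strict_mono less_irrefl)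
  moreover have "rank_in A ` A \<subseteq> {..<card A}"
    using rank_in_less_card[OF A] by auto
  ultimately show ?thesis
    unfolding bij_betw_def by (simp add: card_image card_subset_eq)
qed

lemma card_rank_in_div_eq:
  assumes A: "finite A" and s: "s > 0" and cA: "card A = m * s" and j: "j < m"
  shows "card {x \<in> A. rank_in A x div s = j} = s"
proof -
  have "bij_betw (rank_in A) {x \<in> A. rank_in A x div s = j} {r \<in> {..<card A}. r div s = j}"
    using bij_betw_rank_in[OF A] by (rule bij_betw_Collect) simp
  then have "card {x \<in> A. rank_in A x div s = j} = card {r \<in> {..<card A}. r div s = j}"
    by (rule bij_betw_same_card)
  also have "{r \<in> {..<card A}. r div s = j} = {j * s..<Suc j * s}"
  proof -
    have iff: "r div s = j \<longleftrightarrow> j * s \<le> r \<and> r < Suc j * s" for r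
      using div_less_iff_less_mult[OF s, of r j] div_less_iff_less_mult[OF s, of r "Suc j"] by linarith
    have "Suc j * s \<le> card A"
      using cA j by (simp add: mult_le_mono1 del: mult_Suc)
    then show ?thesis
      unfolding iff by auto
  qed
  finally show ?thesis by simp
qed

lemma ramsey_finite_colours:
  assumes C: "finite C"
  obtains N :: nat where "m \<le> N"
    and "\<And>col. col \<in> nsets {..<N} r \<rightarrow> C \<Longrightarrow> \<exists>H \<in> nsets {..<N} m. \<exists>c. \<forall>X \<in> nsets H r. col X = c"
proof -
  obtain h where h: "bij_betw h C {0..<card C}"
    using ex_bij_betw_finite_nat[OF C] by blast
  obtain N0 :: nat where "partn_lst {..<N0} (replicate (card C) m) r"
    using ramsey_full by blast
  then have N: "partn_lst {..<max N0 m} (replicate (card C) m) r"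
    by (rule partn_lst_greater_resource) simp
  show thesis
  proof (rule that[of "max N0 m"])
    fix col assume col: "col \<in> nsets {..<max N0 m} r \<rightarrow> C"
    then have "h \<circ> col \<in> nsets {..<max N0 m} r \<rightarrow> {..<card C}"
      using bij_betw_apply[OF h] funcset_mem[OF col] by auto
    then obtain i H where i: "i < card C" and H: "H \<in> nsets {..<max N0 m} m"
      and mono: "(h \<circ> col) ` nsets H r \<subseteq> {i}"
      using partn_lstE[OF N] by (metis length_replicate nth_replicate)
    have "col X = inv_into C h i" if "X \<in> nsets H r" for X
    proof -
      have "X \<in> nsets {..<max N0 m} r"
        using that H nsets_mono[of H "{..<max N0 m}"] by (auto simp: nsets_def)
      then have "col X \<in> C" using col by blast
      moreover have "h (col X) = i" using mono that by auto
      ultimately show ?thesis using h by (metis bij_betw_def inv_into_f_f)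
    qed
    then show "\<exists>H \<in> nsets {..<max N0 m} m. \<exists>c. \<forall>X \<in> nsets H r. col X = c"
      using H by blast
  qed simp
qed

lemma card_filter_le_eq_sum:
  assumes "finite Q"
  shows "card {q \<in> Q. g q \<le> j} = (\<Sum>j'\<le>j. card {q \<in> Q. g q = (j' :: nat)})"
proof (induction j)
  case (Suc j)
  have "{q \<in> Q. g q \<le> Suc j} = {q \<in> Q. g q \<le> j} \<union> {q \<in> Q. g q = Suc j}"
    by auto
  then show ?case
    using Suc assms by (simp add: card_Un_disjoint disjoint_iff)
qed simp

definition block_config :: "(nat \<Rightarrow> nat) \<Rightarrow> nat \<Rightarrow> nat set \<Rightarrow> nat \<Rightarrow> nat" where
  "block_config g k Q = (\<lambda>r\<in>{..<k}. card {j \<in> {..<k}. card {q \<in> Q. g q \<le> j} \<le> r})"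

lemma block_config_in: "block_config g k Q \<in> {..<k} \<rightarrow>\<^sub>E {..<Suc k}"
proof -
  have "card {j \<in> {..<k}. P j} \<le> card {..<k}" for P
    by (rule card_mono) auto
  then show ?thesis
    unfolding block_config_def by (auto simp: less_Suc_eq_le)
qed

lemma thresholds_below_rank_in:
  fixes g :: "nat \<Rightarrow> nat"
  assumes Q: "finite Q" "q \<in> Q" and g: "mono g" "g q \<le> k"
  shows "{j \<in> {..<k}. card {q' \<in> Q. g q' \<le> j} \<le> rank_in Q q} = {..<g q}"
proof (intro set_eqI iffI)
  fix j assume j: "j \<in> {j \<in> {..<k}. card {q' \<in> Q. g q' \<le> j} \<le> rank_in Q q}"
  have "\<not> g q \<le> j"
  proof
    assume "g q \<le> j"
    then have "{y \<in> Q. y \<le> q} \<subseteq> {q' \<in> Q. g q' \<le> j}"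
      using g(1) by (auto dest: monoD intro: order_trans)
    then have "card {y \<in> Q. y \<le> q} \<le> card {q' \<in> Q. g q' \<le> j}"
      using Q(1) by (intro card_mono) auto
    then show False
      using j card_le_eq_Suc_rank_in[OF Q] by simp
  qed
  then show "j \<in> {..<g q}" by simp
next
  fix j assume j: "j \<in> {..<g q}"
  have "{q' \<in> Q. g q' \<le> j} \<subseteq> {y \<in> Q. y < q}"
  proof
    fix q' assume "q' \<in> {q' \<in> Q. g q' \<le> j}"
    then have "q' \<in> Q" "g q' < g q" using j by auto
    then show "q' \<in> {y \<in> Q. y < q}"
      using g(1) by (metis (mono_tags) mem_Collect_eq monoD not_le)
  qed
  then have "card {q' \<in> Q. g q' \<le> j} \<le> rank_in Q q"
    unfolding rank_in_def using Q(1) by (intro card_mono) auto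
  then show "j \<in> {j \<in> {..<k}. card {q' \<in> Q. g q' \<le> j} \<le> rank_in Q q}"
    using j g(2) by simp
qed

lemma block_config_rank_in:
  assumes Q: "finite Q" "card Q = k" and q: "q \<in> Q" and g: "mono g" "g q \<le> k"
  shows "block_config g k Q (rank_in Q q) = g q"
proof -
  have "rank_in Q q < k"
    using rank_in_less_card[OF Q(1) q] Q(2) by simp
  then show ?thesis
    unfolding block_config_def using thresholds_below_rank_in[OF Q(1) q g] by simp
qed

definition placed :: "(nat \<Rightarrow> nat \<Rightarrow> nat) \<Rightarrow> nat set \<Rightarrow> (nat \<Rightarrow> nat) \<Rightarrow> nat set" where
  "placed \<rho> Q c = (\<lambda>q. \<rho> (c (rank_in Q q)) q) ` Q"

definition colour :: "(nat \<Rightarrow> nat \<Rightarrow> nat) \<Rightarrow> nat set set \<Rightarrow> nat \<Rightarrow> nat set \<Rightarrow> (nat \<Rightarrow> nat) set" where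
  "colour \<rho> E k Q = {c \<in> {..<k} \<rightarrow>\<^sub>E {..<Suc k}. placed \<rho> Q c \<in> E}"

lemma not_homogeneous_if:
  assumes "X \<in> ksets U k" "Y \<in> ksets U k" "X \<in> E" "Y \<notin> E"
  shows "\<not> homogeneous k U (induced_edges k E U)"
  using assms unfolding homogeneous_def induced_edges_def by auto

lemma ksets_disjoint_if_avoiding:
  assumes inj: "inj_on \<phi> D" and U: "U \<subseteq> \<phi> ` D" and avoid: "\<forall>P \<in> ksets D k. \<phi> ` P \<notin> W"
  shows "ksets U k \<inter> W = {}"
proof (rule ccontr)
  assume "ksets U k \<inter> W \<noteq> {}"
  then obtain X where X: "X \<in> ksets U k" "X \<in> W" by blast
  let ?P = "{p \<in> D. \<phi> p \<in> X}"
  have image: "\<phi> ` ?P = X"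
    using X(1) U unfolding ksets_def by blast
  then have "card ?P = k"
    using X(1) card_image[OF inj_on_subset[OF inj, of ?P]] unfolding ksets_def by auto
  then have "?P \<in> ksets D k"
    unfolding ksets_def by blast
  then show False
    using avoid image X(2) by auto
qed

context
  fixes k s t :: nat and \<rho> :: "nat \<Rightarrow> nat \<Rightarrow> nat" and E :: "nat set set"
    and I :: "nat set" and Col :: "(nat \<Rightarrow> nat) set"
  assumes k: "k \<ge> 2" and s: "s \<ge> 2"
    and inj: "inj_on (\<lambda>(j, i). \<rho> j i) ({..<Suc k} \<times> {..<t})"
    and hom: "blowup_hom (Suc k) t (edge_switch E k) \<rho>"
    and I: "I \<subseteq> {..<t}" "card I = Suc k * s"
    and monochromatic: "\<forall>Q \<in> nsets I k. colour \<rho> E k Q = Col"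
begin

definition block :: "nat \<Rightarrow> nat" where
  "block i = rank_in I i div s"

definition cell :: "nat \<Rightarrow> nat" where
  "cell i = \<rho> (block i) i"

definition part :: "nat \<Rightarrow> nat set" where
  "part j = cell ` {i \<in> I. block i = j}"

lemma finite_I: "finite I"
  using I(1) finite_subset by blast

lemma block_less: "i \<in> I \<Longrightarrow> block i < Suc k"
  unfolding block_def using rank_in_less_card[OF finite_I] I(2) s
  by (simp add: div_less_iff_less_mult)

lemma mono_block: "mono block"
  unfolding block_def by (intro monoI div_le_mono rank_in_mono[OF finite_I])

lemma inj_on_cell: "inj_on cell I"
proof (rule inj_onI)
  fix i i' assume i: "i \<in> I" "i' \<in> I" and eq: "cell i = cell i'"
  have "(block i, i) \<in> {..<Suc k} \<times> {..<t}" "(block i', i') \<in> {..<Suc k} \<times> {..<t}"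
    using i block_less I(1) by auto
  then have "(block i, i) = (block i', i')"
    using eq unfolding cell_def by (intro inj_onD[OF inj]) auto
  then show "i = i'" by simp
qed

lemma card_part: "j < Suc k \<Longrightarrow> card (part j) = s"
proof -
  assume j: "j < Suc k"
  have "card {i \<in> I. block i = j} = s"
    unfolding block_def using s by (intro card_rank_in_div_eq[OF finite_I _ I(2) j]) simp
  moreover have "inj_on cell {i \<in> I. block i = j}"
    by (rule inj_on_subset[OF inj_on_cell]) blast
  ultimately show ?thesis
    unfolding part_def by (simp add: card_image)
qed

lemma part_disjoint: "j \<noteq> j' \<Longrightarrow> part j \<inter> part j' = {}"
proof -
  assume "j \<noteq> j'"
  then have "cell i \<noteq> cell i'" if "i \<in> I" "i' \<in> I" "block i = j" "block i' = j'" for i i'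
    using that inj_onD[OF inj_on_cell] by metis
  then show ?thesis
    unfolding part_def by blast
qed

lemma part_subset: "part j \<subseteq> cell ` I"
  unfolding part_def by blast

lemma cell_image_subset: "cell ` I \<subseteq> (\<lambda>(j, i). \<rho> j i) ` ({..<Suc k} \<times> {..<t})"
proof (rule image_subsetI)
  fix i assume "i \<in> I"
  then have "(block i, i) \<in> {..<Suc k} \<times> {..<t}"
    using block_less I(1) by auto
  then show "cell i \<in> (\<lambda>(j, i). \<rho> j i) ` ({..<Suc k} \<times> {..<t})"
    unfolding cell_def by (rule rev_image_eqI) simp
qed

lemma edge_iff_block_config:
  assumes Q: "Q \<subseteq> I" "card Q = k"
  shows "cell ` Q \<in> E \<longleftrightarrow> block_config block k Q \<in> Col"
proof -
  have fin: "finite Q" using Q(1) finite_I finite_subset by blast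
  have "block_config block k Q (rank_in Q q) = block q" if "q \<in> Q" for q
    using that Q block_less fin by (intro block_config_rank_in mono_block) (auto simp: less_Suc_eq_le)
  then have "placed \<rho> Q (block_config block k Q) = cell ` Q"
    unfolding placed_def cell_def by (intro image_cong) simp_all
  moreover have "Q \<in> nsets I k"
    using Q fin unfolding nsets_def by blast
  then have "Col = {c \<in> {..<k} \<rightarrow>\<^sub>E {..<Suc k}. placed \<rho> Q c \<in> E}"
    using monochromatic unfolding colour_def by blast
  ultimately show ?thesis
    by (simp add: block_config_in)
qed

lemma preimage_cell:
  assumes "S \<subseteq> cell ` I"
  shows "cell ` {i \<in> I. cell i \<in> S} = S"
    and "card {i \<in> I. cell i \<in> S} = card S"
    and "card {i \<in> {i \<in> I. cell i \<in> S}. block i = j} = card (S \<inter> part j)"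
proof -
  show image: "cell ` {i \<in> I. cell i \<in> S} = S"
    using assms by blast
  show "card {i \<in> I. cell i \<in> S} = card S"
    using card_image[OF inj_on_subset[OF inj_on_cell]] image by (metis (no_types, lifting) mem_Collect_eq subsetI)
  have "cell ` {i \<in> {i \<in> I. cell i \<in> S}. block i = j} = S \<inter> part j"
    unfolding part_def using assms by blast
  then show "card {i \<in> {i \<in> I. cell i \<in> S}. block i = j} = card (S \<inter> part j)"
    using card_image[OF inj_on_subset[OF inj_on_cell]] by (metis (no_types, lifting) mem_Collect_eq subsetI)
qed

lemma edge_iff_profile:
  assumes S: "S \<subseteq> cell ` I" "card S = k" and S': "S' \<subseteq> cell ` I" "card S' = k"
    and profile: "\<forall>j<Suc k. card (S \<inter> part j) = card (S' \<inter> part j)"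
  shows "S \<in> E \<longleftrightarrow> S' \<in> E"
proof -
  let ?Q = "{i \<in> I. cell i \<in> S}" and ?Q' = "{i \<in> I. cell i \<in> S'}"
  have "card {q \<in> ?Q. block q \<le> j} = card {q \<in> ?Q'. block q \<le> j}" if "j < k" for j
  proof -
    have "card {q \<in> ?Q. block q \<le> j} = (\<Sum>j'\<le>j. card {q \<in> ?Q. block q = j'})"
      by (rule card_filter_le_eq_sum) (simp add: finite_I)
    also have "\<dots> = (\<Sum>j'\<le>j. card {q \<in> ?Q'. block q = j'})"
      using that profile unfolding preimage_cell(3)[OF S(1)] preimage_cell(3)[OF S'(1)]
      by (intro sum.cong) auto
    also have "\<dots> = card {q \<in> ?Q'. block q \<le> j}"
      by (rule card_filter_le_eq_sum[symmetric]) (simp add: finite_I)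
    finally show ?thesis .
  qed
  then have "block_config block k ?Q = block_config block k ?Q'"
    unfolding block_config_def by (intro restrict_ext arg_cong[where f = card] Collect_cong) auto
  then show ?thesis
    using edge_iff_block_config[of ?Q] edge_iff_block_config[of ?Q'] S S'
      preimage_cell(1,2)[OF S(1)] preimage_cell(1,2)[OF S'(1)] by auto
qed

lemma is_pattern_parts:
  assumes e: "e ` {..<k} \<subseteq> {..<Suc k}" "inj_on e {..<k}"
  shows "is_pattern k k s (\<Union>l<k. part (e l)) (induced_edges k E (\<Union>l<k. part (e l)))"
proof -
  let ?U = "\<Union>l<k. part (e l)"
  have profile_iff: "S \<in> E \<longleftrightarrow> S' \<in> E"
    if S: "S \<in> ksets ?U k" "S' \<in> ksets ?U k"
      and profile: "\<forall>l<k. card (S \<inter> part (e l)) = card (S' \<inter> part (e l))" for S S'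
  proof (rule edge_iff_profile)
    show "S \<subseteq> cell ` I" "S' \<subseteq> cell ` I" "card S = k" "card S' = k"
      using S part_subset unfolding ksets_def by blast+
    show "\<forall>j<Suc k. card (S \<inter> part j) = card (S' \<inter> part j)"
    proof (intro allI impI)
      fix j assume "j < Suc k"
      show "card (S \<inter> part j) = card (S' \<inter> part j)"
      proof (cases "j \<in> e ` {..<k}")
        case True
        then show ?thesis using profile by auto
      next
        case False
        then have "?U \<inter> part j = {}"
          using part_disjoint by blast
        moreover have "S \<subseteq> ?U" "S' \<subseteq> ?U"
          using S unfolding ksets_def by blast+
        ultimately have "S \<inter> part j = {}" "S' \<inter> part j = {}"
          by blast+
        then show ?thesis by simp
      qed
    qed
  qed
  show ?thesis
    unfolding is_pattern_def
  proof (intro conjI exI[of _ "\<lambda>l. part (e l)"])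
    show "finite ?U"
      unfolding part_def using finite_I by simp
    show "induced_edges k E ?U \<subseteq> ksets ?U k"
      unfolding induced_edges_def by blast
    show "\<forall>l<k. part (e l) \<subseteq> ?U \<and> card (part (e l)) = s"
      using e(1) card_part by blast
    show "\<forall>l<k. \<forall>l'<k. l \<noteq> l' \<longrightarrow> part (e l) \<inter> part (e l') = {}"
      using e(2) part_disjoint by (metis inj_on_def lessThan_iff)
    show "(\<Union>l<k. part (e l)) = ?U" ..
    show "\<forall>S\<in>ksets ?U k. \<forall>S'\<in>ksets ?U k. (\<forall>l<k. card (S \<inter> part (e l)) = card (S' \<inter> part (e l))) \<longrightarrow>
        (S \<in> induced_edges k E ?U \<longleftrightarrow> S' \<in> induced_edges k E ?U)"
      unfolding induced_edges_def using profile_iff by blast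
  qed
qed

lemma exists_switch_transversal: "\<exists>a. (\<forall>j<Suc k. a j \<in> part j) \<and> edge_switch E k a"
proof -
  have "\<exists>i. i \<in> I \<and> block i = j" if "j < Suc k" for j
  proof -
    have "part j \<noteq> {}"
      using card_part[OF that] s by auto
    then show ?thesis unfolding part_def by blast
  qed
  then obtain b where b: "\<And>j. j < Suc k \<Longrightarrow> b j \<in> I \<and> block (b j) = j"
    by metis
  then have "(\<lambda>j\<in>{..<Suc k}. b j) \<in> {..<Suc k} \<rightarrow>\<^sub>E {..<t}"
    using I(1) by auto
  then have "edge_switch E k (\<lambda>j\<in>{..<Suc k}. \<rho> j ((\<lambda>j\<in>{..<Suc k}. b j) j))"
    using hom unfolding blowup_hom_def by blast
  moreover have "(\<lambda>j\<in>{..<Suc k}. \<rho> j ((\<lambda>j\<in>{..<Suc k}. b j) j)) j \<in> part j" if "j < Suc k" for j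
    using b[OF that] that unfolding part_def cell_def by force
  ultimately show ?thesis by blast
qed

lemma card_middle_parts: "card (\<Union>l\<in>{1..<k}. part l) = (k - 1) * s"
proof -
  have "card (\<Union>l\<in>{1..<k}. part l) = (\<Sum>l\<in>{1..<k}. card (part l))"
    unfolding part_def using finite_I part_disjoint[unfolded part_def]
    by (intro card_UN_disjoint) auto
  also have "\<dots> = (k - 1) * s"
    using card_part by simp
  finally show ?thesis .
qed

lemma exists_nonhomogeneous_pattern:
  "\<exists>U \<subseteq> (\<lambda>(j, i). \<rho> j i) ` ({..<Suc k} \<times> {..<t}).
     is_pattern k k s U (induced_edges k E U) \<and> \<not> homogeneous k U (induced_edges k E U)"
proof -
  obtain a where a: "\<And>j. j < Suc k \<Longrightarrow> a j \<in> part j" and switch: "edge_switch E k a"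
    using exists_switch_transversal by blast
  have inj_a: "inj_on a {..<Suc k}"
    using a part_disjoint by (intro inj_onI) (metis disjoint_iff lessThan_iff)
  define U1 where "U1 = (\<Union>l<k. part l)"
  define U2 where "U2 = (\<Union>l<k. part (Suc l))"
  have U: "U1 \<subseteq> (\<lambda>(j, i). \<rho> j i) ` ({..<Suc k} \<times> {..<t})" "U2 \<subseteq> (\<lambda>(j, i). \<rho> j i) ` ({..<Suc k} \<times> {..<t})"
    unfolding U1_def U2_def using part_subset cell_image_subset by blast+
  have pattern: "is_pattern k k s U1 (induced_edges k E U1)" "is_pattern k k s U2 (induced_edges k E U2)"
    unfolding U1_def U2_def using is_pattern_parts[of "\<lambda>l. l"] is_pattern_parts[of Suc] by auto
  have first: "a ` {..<k} \<in> ksets U1 k" "a ` {..<k} \<in> E"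
    using switch inj_on_subset[OF inj_a] a unfolding ksets_def U1_def edge_switch_def
    by (auto simp: card_image)
  have "inj_on (\<lambda>j. a (Suc j)) {..<k}"
    using inj_a by (auto simp: inj_on_def)
  then have last: "(\<lambda>j. a (Suc j)) ` {..<k} \<in> ksets U2 k" "(\<lambda>j. a (Suc j)) ` {..<k} \<notin> E"
    using switch a unfolding ksets_def U2_def edge_switch_def by (auto simp: card_image)
  have "(k - 1) * 2 \<le> (k - 1) * s"
    using s by simp
  then have "k \<le> (k - 1) * s"
    using k by linarith
  then obtain S where S: "S \<subseteq> (\<Union>l\<in>{1..<k}. part l)" "card S = k"
    by (rule obtain_subset_with_card_n[where S = "\<Union>l\<in>{1..<k}. part l", unfolded card_middle_parts])
  have "(\<Union>l\<in>{1..<k}. part l) \<subseteq> U1"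
    unfolding U1_def by auto
  then have S1: "S \<subseteq> U1"
    using S(1) by (rule order_trans[rotated])
  have "(\<Union>l\<in>{1..<k}. part l) \<subseteq> U2"
  proof
    fix x assume "x \<in> (\<Union>l\<in>{1..<k}. part l)"
    then obtain l where "l \<in> {1..<k}" "x \<in> part l" by blast
    then have "l - 1 \<in> {..<k}" "x \<in> part (Suc (l - 1))" by auto
    then show "x \<in> U2" unfolding U2_def by blast
  qed
  then have S2: "S \<subseteq> U2"
    using S(1) by (rule order_trans[rotated])
  have middle: "S \<in> ksets U1 k" "S \<in> ksets U2 k"
    using S1 S2 S(2) unfolding ksets_def by simp_all
  show ?thesis
  proof (cases "S \<in> E")
    case True
    then have "\<not> homogeneous k U2 (induced_edges k E U2)"
      using not_homogeneous_if[OF middle(2) last(1)] last(2) by blast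
    then show ?thesis
      using U(2) pattern(2) by blast
  next
    case False
    then have "\<not> homogeneous k U1 (induced_edges k E U1)"
      using not_homogeneous_if[OF first(1) middle(1) first(2)] by blast
    then show ?thesis
      using U(1) pattern(1) by blast
  qed
qed

end

theorem proposition3p2:
  fixes k s :: nat and \<delta> :: real
  assumes "k \<ge> 2" and "s \<ge> 2" and "\<delta> > 0"
  shows "\<exists>\<gamma>::real. \<gamma> > 0 \<and> (\<exists>n0::nat. \<forall>n\<ge>n0. \<forall>(E::nat set set) (W::nat set set).
           E \<subseteq> ksets {..<n} k \<longrightarrow>
           min (real (card E)) (real (n choose k) - real (card E)) \<ge> \<delta> * real n ^ k \<longrightarrow>
           W \<subseteq> ksets {..<n} k \<longrightarrow>
           real (card W) \<le> \<gamma> * real n ^ k \<longrightarrow>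
           (\<exists>U. U \<subseteq> {..<n} \<and>
                is_pattern k k s U (induced_edges k E U) \<and>
                \<not> homogeneous k U (induced_edges k E U) \<and>
                ksets U k \<inter> W = {}))"
proof -
  obtain t where t: "Suc k * s \<le> t" and ramsey: "\<And>col. col \<in> nsets {..<t} k \<rightarrow> Pow ({..<k} \<rightarrow>\<^sub>E {..<Suc k}) \<Longrightarrow>
      \<exists>I \<in> nsets {..<t} (Suc k * s). \<exists>Col. \<forall>Q \<in> nsets I k. col Q = Col"
    using ramsey_finite_colours[of "Pow ({..<k} \<rightarrow>\<^sub>E {..<Suc k})"] by (metis finite_Pow_iff finite_PiE finite_lessThan)
  define c where "c = (\<delta>\<^sup>2 / real k) ^ (t ^ Suc k)"
  define \<gamma> where "\<gamma> = c / (4 * real (k * (Suc k * t)) ^ k)"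
  have "t \<ge> 1"
    using assms(2) t by (metis One_nat_def Suc_le_eq le_trans mult_pos_pos zero_less_Suc numeral_2_eq_2)
  have "c > 0"
    unfolding c_def using assms by simp
  moreover have "k * (Suc k * t) > 0"
    using assms(1) \<open>t \<ge> 1\<close> by simp
  ultimately have "\<gamma> > 0"
    unfolding \<gamma>_def by (intro divide_pos_pos mult_pos_pos zero_less_power) (simp_all only: of_nat_0_less_iff zero_less_numeral)
  show ?thesis
  proof (intro exI[of _ \<gamma>] conjI \<open>\<gamma> > 0\<close> exI[of _ "nat \<lceil>4 * real (Suc k * t) ^ 2 / c\<rceil>"] allI impI)
    fix n E W
    assume n: "n \<ge> nat \<lceil>4 * real (Suc k * t) ^ 2 / c\<rceil>" and E: "E \<subseteq> ksets {..<n} k"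
      and dense: "min (real (card E)) (real (n choose k) - real (card E)) \<ge> \<delta> * real n ^ k"
      and W: "W \<subseteq> ksets {..<n} k" and small: "real (card W) \<le> \<gamma> * real n ^ k"
    have "4 * real (Suc k * t) ^ 2 / c \<le> real n"
      using real_nat_ceiling_ge n of_nat_mono order_trans by blast
    moreover have "real (card W) \<le> c / (4 * real (k * (Suc k * t)) ^ k) * real n ^ k"
      using small unfolding \<gamma>_def .
    moreover have "k \<ge> 1"
      using assms(1) by simp
    ultimately obtain \<rho> where \<rho>: "\<rho> \<in> {..<Suc k} \<rightarrow>\<^sub>E ({..<t} \<rightarrow>\<^sub>E {..<n})"
      "blowup_hom (Suc k) t (edge_switch E k) \<rho>" "inj_on (\<lambda>(j, i). \<rho> j i) ({..<Suc k} \<times> {..<t})"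
      "\<forall>P \<in> ksets ({..<Suc k} \<times> {..<t}) k. (\<lambda>(j, i). \<rho> j i) ` P \<notin> W"
      using exists_injective_avoiding_blowup[OF _ \<open>t \<ge> 1\<close> \<open>\<delta> > 0\<close> c_def E dense W] by blast
    obtain I Col where I: "I \<in> nsets {..<t} (Suc k * s)" and monochromatic: "\<forall>Q \<in> nsets I k. colour \<rho> E k Q = Col"
      using ramsey[of "colour \<rho> E k"] unfolding colour_def by blast
    obtain U where U: "U \<subseteq> (\<lambda>(j, i). \<rho> j i) ` ({..<Suc k} \<times> {..<t})"
      "is_pattern k k s U (induced_edges k E U)" "\<not> homogeneous k U (induced_edges k E U)"
      using exists_nonhomogeneous_pattern[OF assms(1,2) \<rho>(3,2) _ _ monochromatic] I unfolding nsets_def by blast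
    moreover have "U \<subseteq> {..<n}"
      using U(1) \<rho>(1) by (auto simp: PiE_iff)
    moreover have "ksets U k \<inter> W = {}"
      using ksets_disjoint_if_avoiding[OF \<rho>(3) U(1) \<rho>(4)] .
    ultimately show "\<exists>U. U \<subseteq> {..<n} \<and> is_pattern k k s U (induced_edges k E U) \<and>
        \<not> homogeneous k U (induced_edges k E U) \<and> ksets U k \<inter> W = {}"
      by blast
  qed
qed

end
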